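(* Let $n\ge1$ be an integer with $\phi(n)\ge n/2$, and let $\mathcal{D}_{S_1},\mathcal{D}_{S_2}\subseteq\mathcal{D}_{[n]}\setminus\{n\}$. If $\mathrm{Spec}(\mathrm{ICG}(n,\mathcal{D}_{S_1}))=\mathrm{Spec}(\mathrm{ICG}(n,\mathcal{D}_{S_2}))$, then $1\notin\mathcal{D}_{S_1}\triangle\mathcal{D}_{S_2}$.
   Context: Identify $\mathbb{Z}_n$ with $[n]=\{1,\dots,n\}$. For a divisor $d$ of $n$, $G_n(d)=\{j\in[n]:\gcd(j,n)=d\}$; $\mathcal{D}_{[n]}$ is the set of positive divisors of $n$. For $\mathcal{D}\subseteq\mathcal{D}_{[n]}\setminus\{n\}$, $\mathrm{ICG}(n,\mathcal{D})=\mathrm{Cay}(\mathbb{Z}_n,S)$ with $S=\bigcup_{d\in\mathcal{D}}G_n(d)$, and $\mathcal{D}=\mathcal{D}_S$. $\phi$ is Euler's totient function; $\triangle$ denotes symmetric difference; $\mathrm{Spec}$ is the multiset of adjacency eigenvalues. *)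

theory Defs
  imports "Jordan_Normal_Form.Char_Poly" "HOL-Number_Theory.Totient"
begin

text \<open>G_n(d) = {j in [n] : gcd(j,n) = d}, with [n] = {1..n} identified with Z_n.\<close>
definition Gn :: "nat \<Rightarrow> nat \<Rightarrow> nat set" where
  "Gn n d = {j \<in> {1..n}. gcd j n = d}"

definition divisors_of :: "nat \<Rightarrow> nat set" where
  "divisors_of n = {d. d dvd n \<and> d > 0}"

definition ICG_conn :: "nat \<Rightarrow> nat set \<Rightarrow> nat set" where
  "ICG_conn n D = (\<Union>d\<in>D. Gn n d)"

text \<open>Adjacency matrix of Cay(Z_n, S): vertex i+1 (matrix index i < n) is adjacent
  to vertex j+1 iff (j+1) - (i+1) is congruent mod n to some element of S.\<close>
definition cayley_adj :: "nat \<Rightarrow> nat set \<Rightarrow> complex mat" where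
  "cayley_adj n S = mat n n (\<lambda>(i, j).
     if \<exists>s\<in>S. [int j - int i = int s] (mod int n) then 1 else 0)"

definition ICG_adj :: "nat \<Rightarrow> nat set \<Rightarrow> complex mat" where
  "ICG_adj n D = cayley_adj n (ICG_conn n D)"

definition Spec :: "complex mat \<Rightarrow> complex multiset" where
  "Spec A = proots (char_poly A)"

end

theory Submission
  imports Defs "Jordan_Normal_Form.Schur_Decomposition"
begin

text \<open>Cospectral matrices have the same power sums of eigenvalues, hence the same trace of
  the square. For the loopless undirected Cayley graph \<open>Cay(\<int>\<^sub>n, S)\<close> this trace counts
  closed walks of length 2, i.e.\ equals \<open>n |S|\<close>; so cospectral integral circulant graphs
  have connection sets of equal size. If \<open>1 \<in> D\<close>, the connection set contains all \<open>\<phi>(n)\<close>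
  units of \<open>\<int>\<^sub>n\<close>; if \<open>1 \<notin> D\<close>, it avoids the units and \<open>0\<close>, so it has at most
  \<open>n - 1 - \<phi>(n)\<close> elements. Under \<open>\<phi>(n) \<ge> n/2\<close> these two sizes cannot agree.\<close>

definition mat_trace :: "'a::comm_semiring_0 mat \<Rightarrow> 'a" where
  "mat_trace A = (\<Sum>i<dim_row A. A $$ (i, i))"

lemma mat_trace_mult_comm:
  fixes A :: "'a::comm_semiring_0 mat"
  assumes A: "A \<in> carrier_mat n m" and B: "B \<in> carrier_mat m n"
  shows "mat_trace (A * B) = mat_trace (B * A)"
proof -
  have "mat_trace (A * B) = (\<Sum>i<n. \<Sum>k<m. A $$ (i, k) * B $$ (k, i))"
    using A B unfolding mat_trace_def
    by (intro sum.cong refl) (auto simp: scalar_prod_def atLeast0LessThan)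
  also have "\<dots> = (\<Sum>k<m. \<Sum>i<n. B $$ (k, i) * A $$ (i, k))"
    by (subst sum.swap) (simp add: mult.commute)
  also have "\<dots> = mat_trace (B * A)"
    using A B unfolding mat_trace_def
    by (intro sum.cong refl) (auto simp: scalar_prod_def atLeast0LessThan)
  finally show ?thesis .
qed

lemma mat_trace_similar:
  fixes A :: "'a::comm_ring_1 mat"
  assumes "similar_mat A B"
  shows "mat_trace A = mat_trace B"
proof -
  obtain n P Q where carrier: "{A, B, P, Q} \<subseteq> carrier_mat n n"
    and QP: "Q * P = 1\<^sub>m n" and A: "A = P * B * Q"
    using similar_matD[OF assms] by blast
  have "mat_trace A = mat_trace (Q * (P * B))"
    unfolding A using carrier by (intro mat_trace_mult_comm) auto
  also have "Q * (P * B) = (Q * P) * B"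
    using carrier by (intro assoc_mult_mat[symmetric]) auto
  also have "\<dots> = B"
    using carrier QP left_mult_one_mat[of B n n] by simp
  finally show ?thesis .
qed

lemma upper_triangular_mult_entry:
  fixes A B :: "'a::semiring_0 mat"
  assumes A: "A \<in> carrier_mat n n" "upper_triangular A"
    and B: "B \<in> carrier_mat n n" "upper_triangular B"
    and "j \<le> i" "i < n"
  shows "(A * B) $$ (i, j) = A $$ (i, i) * B $$ (i, j)"
proof -
  have "(A * B) $$ (i, j) = (\<Sum>k\<in>{0..<n}. A $$ (i, k) * B $$ (k, j))"
    using assms by (simp add: scalar_prod_def)
  also have "\<dots> = A $$ (i, i) * B $$ (i, j) + (\<Sum>k\<in>{0..<n} - {i}. A $$ (i, k) * B $$ (k, j))"
    using \<open>i < n\<close> by (subst sum.remove[of _ i]) auto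
  also have "(\<Sum>k\<in>{0..<n} - {i}. A $$ (i, k) * B $$ (k, j)) = 0"
  proof (intro sum.neutral ballI)
    fix k assume "k \<in> {0..<n} - {i}"
    then have "k < i \<or> j < k" "k < n" using \<open>j \<le> i\<close> by auto
    then show "A $$ (i, k) * B $$ (k, j) = 0"
      using A B \<open>i < n\<close> by (auto simp: upper_triangular_def)
  qed
  finally show ?thesis by simp
qed

lemma upper_triangular_mult:
  fixes A B :: "'a::semiring_0 mat"
  assumes "A \<in> carrier_mat n n" "upper_triangular A" "B \<in> carrier_mat n n" "upper_triangular B"
  shows "upper_triangular (A * B)"
  using assms upper_triangular_mult_entry[OF assms] by (auto simp: upper_triangular_def)

lemma upper_triangular_pow_mat:
  fixes A :: "'a::comm_semiring_1 mat"
  assumes A: "A \<in> carrier_mat n n" "upper_triangular A"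
  shows "upper_triangular (A ^\<^sub>m k) \<and> (\<forall>i<n. (A ^\<^sub>m k) $$ (i, i) = A $$ (i, i) ^ k)"
proof (induction k)
  case 0
  then show ?case using A by simp
next
  case (Suc k)
  have Ak: "A ^\<^sub>m k \<in> carrier_mat n n" using A by simp
  show ?case
    using Suc A upper_triangular_mult[OF Ak _ A] upper_triangular_mult_entry[OF Ak _ A]
    by (simp add: mult.commute)
qed

lemma proots_prod_linear_factors:
  "proots (\<Prod>a\<leftarrow>as. [:- a, 1:]) = mset (as :: 'a::idom list)"
proof (induction as)
  case Nil
  then show ?case by simp
next
  case (Cons a as)
  have "(\<Prod>a\<leftarrow>as. [:- a, 1:]) \<noteq> 0"
    by (auto simp: prod_list_zero_iff)
  then have "proots ([:- a, 1:] * (\<Prod>a\<leftarrow>as. [:- a, 1:]))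
      = proots [:- a, 1:] + proots (\<Prod>a\<leftarrow>as. [:- a, 1:])"
    by (intro proots_mult) auto
  then show ?case
    using Cons by simp
qed

lemma sum_power_Spec_eq_mat_trace_pow:
  assumes A: "(A :: complex mat) \<in> carrier_mat n n"
  shows "(\<Sum>x\<in>#Spec A. x ^ k) = mat_trace (A ^\<^sub>m k)"
proof -
  obtain as where "char_poly A = (\<Prod>a\<leftarrow>as. [:- a, 1:])"
    using char_poly_factorized[OF A] by blast
  then obtain B where B: "B \<in> carrier_mat n n" "upper_triangular B" "similar_mat A B"
    using schur_upper_triangular[OF A] by blast
  have "Spec A = mset (diag_mat B)"
    unfolding Spec_def char_poly_similar[OF B(3)] char_poly_upper_triangular[OF B(1,2)]
    by (rule proots_prod_linear_factors)
  then have "(\<Sum>x\<in>#Spec A. x ^ k) = (\<Sum>i<n. B $$ (i, i) ^ k)"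
    using B(1) by (simp add: diag_mat_def sum_unfold_sum_mset image_mset.compositionality
        o_def lessThan_atLeast0)
  also have "\<dots> = mat_trace (B ^\<^sub>m k)"
    using upper_triangular_pow_mat[OF B(1,2)] B(1) by (simp add: mat_trace_def)
  also have "\<dots> = mat_trace (A ^\<^sub>m k)"
    using B(3) by (metis mat_trace_similar similar_mat_def similar_mat_wit_pow)
  finally show ?thesis .
qed

lemma cayley_adj_carrier: "cayley_adj n S \<in> carrier_mat n n"
  unfolding cayley_adj_def by simp

lemma cayley_adj_entry:
  assumes "S \<subseteq> {..<n}" "i < n" "j < n"
  shows "cayley_adj n S $$ (i, j) = (if nat ((int j - int i) mod int n) \<in> S then 1 else 0)"
proof -
  have "[int j - int i = int s] (mod int n) \<longleftrightarrow> nat ((int j - int i) mod int n) = s"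
    if "s \<in> S" for s
    using that assms by (auto simp: cong_def)
  then show ?thesis
    using assms unfolding cayley_adj_def by auto
qed

lemma cayley_adj_symmetric:
  assumes "S \<subseteq> {..<n}" "\<forall>s\<in>S. n - s \<in> S" "i < n" "j < n"
  shows "cayley_adj n S $$ (j, i) = cayley_adj n S $$ (i, j)"
proof -
  have flip: "\<exists>t\<in>S. [int a - int b = int t] (mod int n)"
    if "s \<in> S" "[int b - int a = int s] (mod int n)" for a b s
  proof
    show "n - s \<in> S" using that assms by blast
    have "int n dvd (int b - int a) - int s"
      using that(2) by (simp add: cong_iff_dvd_diff)
    then have "int n dvd - ((int b - int a) - int s) - int n"
      by (metis dvd_diff dvd_minus_iff dvd_refl)
    moreover have "int (n - s) = int n - int s"
      using that(1) assms(1) by auto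
    ultimately show "[int a - int b = int (n - s)] (mod int n)"
      by (simp add: cong_iff_dvd_diff algebra_simps)
  qed
  then have "(\<exists>s\<in>S. [int i - int j = int s] (mod int n))
      \<longleftrightarrow> (\<exists>s\<in>S. [int j - int i = int s] (mod int n))"
    by blast
  then show ?thesis
    using assms unfolding cayley_adj_def by simp
qed

lemma cayley_adj_row_sum:
  assumes S: "S \<subseteq> {..<n}" and i: "i < n"
  shows "(\<Sum>j<n. cayley_adj n S $$ (i, j)) = of_nat (card S)"
proof -
  define shift where "shift j = nat ((int j - int i) mod int n)" for j
  have "inj_on shift {..<n}"
  proof
    fix a b assume "a \<in> {..<n}" "b \<in> {..<n}" "shift a = shift b"
    then have "[int a - int i = int b - int i] (mod int n)"
      using i by (simp add: shift_def cong_def eq_nat_nat_iff)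
    then have "[int a = int b] (mod int n)"
      using cong_add[OF _ cong_refl[of "int i"]] by fastforce
    then show "a = b"
      using \<open>a \<in> {..<n}\<close> \<open>b \<in> {..<n}\<close>
      by (auto simp: cong_int_iff intro: cong_less_modulus_unique_nat)
  qed
  moreover have "shift ` {..<n} \<subseteq> {..<n}"
    using i by (auto simp: shift_def nat_less_iff)
  ultimately have "bij_betw shift {..<n} {..<n}"
    by (simp add: bij_betw_def endo_inj_surj)
  then have "(\<Sum>j<n. if shift j \<in> S then 1 else 0) = (\<Sum>k<n. if k \<in> S then 1 else (0::complex))"
    by (rule sum.reindex_bij_betw)
  also have "\<dots> = of_nat (card S)"
    by (simp add: sum.If_cases Int_commute[of "{..<n}"] Int_absorb2[OF S])
  finally show ?thesis
    using S i by (simp add: cayley_adj_entry shift_def)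
qed

lemma mat_trace_square_cayley_adj:
  assumes S: "S \<subseteq> {..<n}" "\<forall>s\<in>S. n - s \<in> S"
  shows "mat_trace (cayley_adj n S * cayley_adj n S) = of_nat (n * card S)"
proof -
  let ?A = "cayley_adj n S"
  have "mat_trace (?A * ?A) = (\<Sum>i<n. \<Sum>j<n. ?A $$ (i, j) * ?A $$ (j, i))"
    using cayley_adj_carrier[of n S] unfolding mat_trace_def
    by (intro sum.cong refl) (auto simp: scalar_prod_def atLeast0LessThan)
  \<comment> \<open>a symmetric 0/1 matrix satisfies \<open>A\<^sub>i\<^sub>j A\<^sub>j\<^sub>i = A\<^sub>i\<^sub>j\<close>\<close>
  also have "\<dots> = (\<Sum>i<n. \<Sum>j<n. ?A $$ (i, j))"
    using cayley_adj_symmetric[OF S] by (intro sum.cong refl) (auto simp: cayley_adj_def)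
  also have "\<dots> = (\<Sum>i<n. of_nat (card S))"
    using cayley_adj_row_sum[OF S(1)] by simp
  finally show ?thesis by simp
qed

lemma ICG_conn_eq:
  assumes "D \<subseteq> divisors_of n - {n}"
  shows "ICG_conn n D = {s \<in> {1..<n}. gcd s n \<in> D}"
  using assms by (auto simp: ICG_conn_def Gn_def)

lemma ICG_conn_symmetric:
  assumes D: "D \<subseteq> divisors_of n - {n}" and s: "s \<in> ICG_conn n D"
  shows "n - s \<in> ICG_conn n D"
proof -
  have "s \<in> {1..<n}" "gcd s n \<in> D"
    using s unfolding ICG_conn_eq[OF D] by auto
  moreover have "gcd (n - s) n = gcd s n"
    using \<open>s \<in> {1..<n}\<close> by (simp add: gcd_diff2_nat)
  ultimately show ?thesis
    unfolding ICG_conn_eq[OF D] by auto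
qed

lemma mat_trace_square_ICG_adj:
  assumes "D \<subseteq> divisors_of n - {n}"
  shows "mat_trace (ICG_adj n D * ICG_adj n D) = of_nat (n * card (ICG_conn n D))"
proof -
  have "ICG_conn n D \<subseteq> {..<n}"
    unfolding ICG_conn_eq[OF assms] by auto
  then show ?thesis
    unfolding ICG_adj_def
    by (intro mat_trace_square_cayley_adj) (auto intro: ICG_conn_symmetric[OF assms])
qed

lemma card_ICG_conn_eq_if_cospectral:
  assumes D1: "D1 \<subseteq> divisors_of n - {n}" and D2: "D2 \<subseteq> divisors_of n - {n}"
    and "n \<ge> 1" and cospectral: "Spec (ICG_adj n D1) = Spec (ICG_adj n D2)"
  shows "card (ICG_conn n D1) = card (ICG_conn n D2)"
proof -
  have sum_squares: "(\<Sum>x\<in>#Spec (ICG_adj n D). x ^ 2) = mat_trace (ICG_adj n D * ICG_adj n D)"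
    for D
    using sum_power_Spec_eq_mat_trace_pow[of "ICG_adj n D" n 2] cayley_adj_carrier[of n]
    by (simp add: ICG_adj_def numeral_2_eq_2)
  have "(of_nat (n * card (ICG_conn n D1)) :: complex) = mat_trace (ICG_adj n D1 * ICG_adj n D1)"
    using mat_trace_square_ICG_adj[OF D1] by simp
  also have "\<dots> = mat_trace (ICG_adj n D2 * ICG_adj n D2)"
    using sum_squares cospectral by metis
  also have "\<dots> = of_nat (n * card (ICG_conn n D2))"
    using mat_trace_square_ICG_adj[OF D2] by simp
  finally show ?thesis
    using \<open>n \<ge> 1\<close> by (simp only: of_nat_eq_iff) simp
qed

lemma totient_le_card_ICG_conn:
  assumes "1 \<in> D"
  shows "totient n \<le> card (ICG_conn n D)"
proof -
  have "totatives n \<subseteq> ICG_conn n D"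
    using assms by (auto simp: totatives_def ICG_conn_def Gn_def coprime_iff_gcd_eq_1)
  moreover have "finite (ICG_conn n D)"
    by (rule finite_subset[of _ "{1..n}"]) (auto simp: ICG_conn_def Gn_def)
  ultimately show ?thesis
    unfolding totient_def by (rule card_mono[rotated])
qed

lemma card_ICG_conn_add_totient_less:
  assumes D: "D \<subseteq> divisors_of n - {n}" and "1 \<notin> D" and "n \<ge> 2"
  shows "card (ICG_conn n D) + totient n < n"
proof -
  have "ICG_conn n D \<inter> totatives n = {}"
    using \<open>1 \<notin> D\<close> by (auto simp: ICG_conn_eq[OF D] totatives_def coprime_iff_gcd_eq_1)
  moreover have "finite (ICG_conn n D)"
    by (simp add: ICG_conn_eq[OF D])
  ultimately have "card (ICG_conn n D) + card (totatives n) = card (ICG_conn n D \<union> totatives n)"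
    by (simp add: card_Un_disjoint)
  also have "\<dots> \<le> card {1..<n}"
    using \<open>n \<ge> 2\<close> totatives_less[of _ n]
    by (intro card_mono) (auto simp: ICG_conn_eq[OF D] totatives_def)
  finally show ?thesis
    using \<open>n \<ge> 2\<close> by (simp add: totient_def)
qed

theorem lemma3p13:
  fixes n :: nat and D1 D2 :: "nat set"
  assumes "n \<ge> 1"
    and "real (totient n) \<ge> real n / 2"
    and "D1 \<subseteq> divisors_of n - {n}"
    and "D2 \<subseteq> divisors_of n - {n}"
    and "Spec (ICG_adj n D1) = Spec (ICG_adj n D2)"
  shows "1 \<notin> (D1 - D2) \<union> (D2 - D1)"
proof
  assume one: "1 \<in> (D1 - D2) \<union> (D2 - D1)"
  then have "n \<ge> 2"
    using assms(1,3,4) by (cases "n = 1") auto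
  have "n \<le> 2 * totient n"
    using assms(2) by linarith
  then have "card (ICG_conn n B) < card (ICG_conn n A)"
    if "B \<subseteq> divisors_of n - {n}" "1 \<in> A" "1 \<notin> B" for A B
    using card_ICG_conn_add_totient_less[OF that(1,3) \<open>n \<ge> 2\<close>]
      totient_le_card_ICG_conn[OF that(2), where n = n]
    by linarith
  moreover have "card (ICG_conn n D1) = card (ICG_conn n D2)"
    using card_ICG_conn_eq_if_cospectral assms by blast
  ultimately show False
    using one assms(3,4) by (metis Diff_iff Un_iff less_irrefl)
qed

end
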